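(* Let $x\in V(D^+)\setminus\{s\}$ with $g^*(x)\neq\infty$, and let $y^*$ be a vertex with $g(x,y^* )=g^*(x)$. Then $(x,y^* )$ is valid, i.e. there exist a directed $sx$-path, a directed $y^*x$-path and a directed $y^*t$-path in $D^+$ which are mutually internally disjoint.
   Context: $G=(V,E,w)$ is a simple, connected, undirected graph with positive edge lengths, $s,t\in V$, $d(\cdot,\cdot)$ the shortest path distance in $G$. $D$ is the union of all shortest $st$-paths of $G$, and $D^+$ is the directed acyclic graph obtained from $D$ by orienting every edge toward $t$. $x\prec y$ means $x$ is an ancestor of $y$ in $D^+$ (a directed path of positive length from $x$ to $y$ exists). For $x\neq s$, $v\neq x$ is an $s$-dominator of $x$ if every directed path from $s$ to $x$ in $D^+$ contains $v$, and $I_s(x)$ is the $s$-dominator of $x$ closest to $x$ (every other $s$-dominator of $x$ is an $s$-dominator of $I_s(x)$). Symmetrically, for $x\neq t$, $v\neq x$ is a $t$-dominator of $x$ if every directed path from $x$ to $t$ in $D^+$ contains $v$, and $I_t(x)$ is the $t$-dominator closest to $x$. For $x\neq s$, $C(x)=\{v: I_s(x)\prec v\prec x\}$. For $x\neq s$ and $y\in V(D^+)$, $g(x,y)=d(y,x)$ if $y\in C(x)$ and $x\prec I_t(y)$, and $g(x,y)=\infty$ otherwise; $g^*(x)=\min_y g(x,y)$. Paths are internally disjoint if they share no vertex other than common endpoints. *)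

theory Defs
  imports Complex_Main "HOL-Library.Extended_Real"
begin

definition is_walk :: "('a \<times> 'a) set \<Rightarrow> 'a list \<Rightarrow> 'a \<Rightarrow> 'a \<Rightarrow> bool" where
  "is_walk E p u v \<longleftrightarrow> p \<noteq> [] \<and> hd p = u \<and> last p = v \<and>
     (\<forall>i < length p - 1. (p ! i, p ! Suc i) \<in> E)"

definition is_path :: "('a \<times> 'a) set \<Rightarrow> 'a list \<Rightarrow> 'a \<Rightarrow> 'a \<Rightarrow> bool" where
  "is_path E p u v \<longleftrightarrow> is_walk E p u v \<and> distinct p"

definition walk_len :: "('a \<Rightarrow> 'a \<Rightarrow> real) \<Rightarrow> 'a list \<Rightarrow> real" where
  "walk_len w p = (\<Sum>i < length p - 1. w (p ! i) (p ! Suc i))"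

definition simple_graph :: "'a set \<Rightarrow> ('a \<times> 'a) set \<Rightarrow> ('a \<Rightarrow> 'a \<Rightarrow> real) \<Rightarrow> bool" where
  "simple_graph V E w \<longleftrightarrow> finite V \<and> E \<subseteq> V \<times> V \<and> sym E \<and> (\<forall>v. (v, v) \<notin> E)
     \<and> (\<forall>(u, v) \<in> E. w u v > 0 \<and> w u v = w v u)
     \<and> (\<forall>u \<in> V. \<forall>v \<in> V. \<exists>p. is_walk E p u v)"

definition gdist :: "('a \<times> 'a) set \<Rightarrow> ('a \<Rightarrow> 'a \<Rightarrow> real) \<Rightarrow> 'a \<Rightarrow> 'a \<Rightarrow> real" where
  "gdist E w u v = Inf {walk_len w p | p. is_walk E p u v}"

definition shortest_path :: "('a \<times> 'a) set \<Rightarrow> ('a \<Rightarrow> 'a \<Rightarrow> real) \<Rightarrow> 'a list \<Rightarrow> 'a \<Rightarrow> 'a \<Rightarrow> bool" where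
  "shortest_path E w p u v \<longleftrightarrow> is_path E p u v \<and> walk_len w p = gdist E w u v"

(* D^+ : union of all shortest st-paths, every edge oriented toward t
   (i.e. in the direction it is traversed by a shortest st-path) *)
definition DV :: "('a \<times> 'a) set \<Rightarrow> ('a \<Rightarrow> 'a \<Rightarrow> real) \<Rightarrow> 'a \<Rightarrow> 'a \<Rightarrow> 'a set" where
  "DV E w s t = (\<Union>{set p | p. shortest_path E w p s t})"

definition DA :: "('a \<times> 'a) set \<Rightarrow> ('a \<Rightarrow> 'a \<Rightarrow> real) \<Rightarrow> 'a \<Rightarrow> 'a \<Rightarrow> ('a \<times> 'a) set" where
  "DA E w s t = {(p ! i, p ! Suc i) | p i. shortest_path E w p s t \<and> i < length p - 1}"

definition dpath :: "('a \<times> 'a) set \<Rightarrow> ('a \<Rightarrow> 'a \<Rightarrow> real) \<Rightarrow> 'a \<Rightarrow> 'a \<Rightarrow> 'a list \<Rightarrow> 'a \<Rightarrow> 'a \<Rightarrow> bool" where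
  "dpath E w s t p u v \<longleftrightarrow> is_path (DA E w s t) p u v"

definition anc :: "('a \<times> 'a) set \<Rightarrow> ('a \<Rightarrow> 'a \<Rightarrow> real) \<Rightarrow> 'a \<Rightarrow> 'a \<Rightarrow> 'a \<Rightarrow> 'a \<Rightarrow> bool" where
  "anc E w s t x y \<longleftrightarrow> (x, y) \<in> (DA E w s t)\<^sup>+"

definition sdom :: "('a \<times> 'a) set \<Rightarrow> ('a \<Rightarrow> 'a \<Rightarrow> real) \<Rightarrow> 'a \<Rightarrow> 'a \<Rightarrow> 'a \<Rightarrow> 'a \<Rightarrow> bool" where
  "sdom E w s t v x \<longleftrightarrow> v \<noteq> x \<and> (\<forall>p. dpath E w s t p s x \<longrightarrow> v \<in> set p)"

definition tdom :: "('a \<times> 'a) set \<Rightarrow> ('a \<Rightarrow> 'a \<Rightarrow> real) \<Rightarrow> 'a \<Rightarrow> 'a \<Rightarrow> 'a \<Rightarrow> 'a \<Rightarrow> bool" where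
  "tdom E w s t v x \<longleftrightarrow> v \<noteq> x \<and> (\<forall>p. dpath E w s t p x t \<longrightarrow> v \<in> set p)"

definition Is :: "('a \<times> 'a) set \<Rightarrow> ('a \<Rightarrow> 'a \<Rightarrow> real) \<Rightarrow> 'a \<Rightarrow> 'a \<Rightarrow> 'a \<Rightarrow> 'a" where
  "Is E w s t x = (THE v. sdom E w s t v x \<and>
      (\<forall>u. sdom E w s t u x \<and> u \<noteq> v \<longrightarrow> sdom E w s t u v))"

definition It :: "('a \<times> 'a) set \<Rightarrow> ('a \<Rightarrow> 'a \<Rightarrow> real) \<Rightarrow> 'a \<Rightarrow> 'a \<Rightarrow> 'a \<Rightarrow> 'a" where
  "It E w s t x = (THE v. tdom E w s t v x \<and>
      (\<forall>u. tdom E w s t u x \<and> u \<noteq> v \<longrightarrow> tdom E w s t u v))"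

definition Cset :: "('a \<times> 'a) set \<Rightarrow> ('a \<Rightarrow> 'a \<Rightarrow> real) \<Rightarrow> 'a \<Rightarrow> 'a \<Rightarrow> 'a \<Rightarrow> 'a set" where
  "Cset E w s t x = {v. anc E w s t (Is E w s t x) v \<and> anc E w s t v x}"

definition gfun :: "('a \<times> 'a) set \<Rightarrow> ('a \<Rightarrow> 'a \<Rightarrow> real) \<Rightarrow> 'a \<Rightarrow> 'a \<Rightarrow> 'a \<Rightarrow> 'a \<Rightarrow> ereal" where
  "gfun E w s t x y = (if y \<in> Cset E w s t x \<and> anc E w s t x (It E w s t y)
                       then ereal (gdist E w y x) else \<infinity>)"

definition gstar :: "('a \<times> 'a) set \<Rightarrow> ('a \<Rightarrow> 'a \<Rightarrow> real) \<Rightarrow> 'a \<Rightarrow> 'a \<Rightarrow> 'a \<Rightarrow> ereal" where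
  "gstar E w s t x = (INF y \<in> DV E w s t. gfun E w s t x y)"

definition int_disjoint :: "'a list \<Rightarrow> 'a list \<Rightarrow> bool" where
  "int_disjoint P Q \<longleftrightarrow> set P \<inter> set Q \<subseteq> {hd P, last P} \<inter> {hd Q, last Q}"

end

(*
  Write y for the minimiser y*.  Since y lies in C(x) and x precedes I_t(y), the vertex x does not
  t-dominate y, so some yt-path avoids x; and no vertex other than x separates both s and y from x,
  since it would lie after y and yet s-dominate I_s(x), which precedes y.  A two-path version of
  Menger's theorem in the DAG D+ then gives an sx-path and a yx-path meeting only in x.  If one of
  them shared a vertex other than y with the yt-path, a last shared vertex z would satisfy
  y < z < x and branch towards x and t; then x precedes I_t(z), so z lies in C(x) with
  g(x,z) = d(z,x) < d(y,x), contradicting the choice of y.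
*)

theory Submission
  imports Defs
begin

lemma is_walk_iff_successively:
  "is_walk A p u v \<longleftrightarrow> p \<noteq> [] \<and> hd p = u \<and> last p = v \<and> successively (\<lambda>a b. (a, b) \<in> A) p"
  unfolding is_walk_def successively_conv_nth by (auto simp: less_diff_conv)

lemma is_walk_append:
  assumes "is_walk A p u m" "is_walk A q m v"
  shows "is_walk A (p @ tl q) u v"
proof -
  obtain q' where "q = m # q'"
    using assms(2) by (cases q) (auto simp: is_walk_def)
  then show ?thesis
    using assms unfolding is_walk_iff_successively
    by (cases "q' = []") (auto simp: successively_append_iff successively_Cons)
qed

lemma is_walk_take: "is_walk A p u v \<Longrightarrow> j < length p \<Longrightarrow> is_walk A (take (Suc j) p) u (p ! j)"
  unfolding is_walk_def by (auto simp: last_conv_nth hd_conv_nth)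

lemma is_walk_drop: "is_walk A p u v \<Longrightarrow> j < length p \<Longrightarrow> is_walk A (drop j p) (p ! j) v"
  unfolding is_walk_def by (auto simp: hd_drop_conv_nth last_drop)

lemma is_walk_sorted_wrt_trancl:
  assumes "is_walk A p u v"
  shows "sorted_wrt (\<lambda>a b. (a, b) \<in> A\<^sup>+) p"
proof -
  have "successively (\<lambda>a b. (a, b) \<in> A\<^sup>+) p"
    using assms by (auto simp: is_walk_iff_successively elim: successively_mono)
  moreover have "transp (\<lambda>a b. (a, b) \<in> A\<^sup>+)"
    by (auto intro: transpI trancl_trans)
  ultimately show ?thesis by (simp add: successively_conv_sorted_wrt)
qed

lemma distinct_if_is_walk_acyclic:
  assumes "acyclic A" "is_walk A p u v"
  shows "distinct p"
  unfolding distinct_conv_nth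
proof (intro allI impI)
  fix i j assume "i < length p" "j < length p" "i \<noteq> j"
  then have "(p ! i, p ! j) \<in> A\<^sup>+ \<or> (p ! j, p ! i) \<in> A\<^sup>+"
    using sorted_wrt_nth_less[OF is_walk_sorted_wrt_trancl[OF assms(2)]]
    by (metis linorder_neqE_nat)
  then show "p ! i \<noteq> p ! j" using assms(1) by (auto simp: acyclic_def)
qed

lemma is_path_iff_is_walk: "acyclic A \<Longrightarrow> is_path A p u v \<longleftrightarrow> is_walk A p u v"
  unfolding is_path_def by (auto dest: distinct_if_is_walk_acyclic)

lemma is_path_nth_trancl:
  assumes "is_path A p u v" "i < j" "j < length p"
  shows "(p ! i, p ! j) \<in> A\<^sup>+"
proof -
  have "sorted_wrt (\<lambda>a b. (a, b) \<in> A\<^sup>+) p"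
    using assms(1) unfolding is_path_def by (blast intro: is_walk_sorted_wrt_trancl)
  from sorted_wrt_nth_less[OF this assms(2,3)] show ?thesis by simp
qed

lemma is_path_source_in_set: "is_path A p u v \<Longrightarrow> u \<in> set p"
  unfolding is_path_def is_walk_def by auto

lemma is_path_target_in_set: "is_path A p u v \<Longrightarrow> v \<in> set p"
  unfolding is_path_def is_walk_def by auto

lemma is_path_set_rtrancl:
  assumes "is_path A p u v" "z \<in> set p"
  shows "(u, z) \<in> A\<^sup>* \<and> (z, v) \<in> A\<^sup>*"
proof -
  have ends: "p ! 0 = u" "p ! (length p - 1) = v" "p \<noteq> []"
    using assms(1) by (auto simp: is_path_def is_walk_def hd_conv_nth last_conv_nth)
  have le: "(p ! i, p ! j) \<in> A\<^sup>*" if "i \<le> j" "j < length p" for i j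
    using is_path_nth_trancl[OF assms(1), of i j] that by (cases "i = j") auto
  obtain k where "k < length p" "p ! k = z"
    using assms(2) by (auto simp: in_set_conv_nth)
  then show ?thesis using le[of 0 k] le[of k "length p - 1"] ends by auto
qed

lemma is_path_set_trancl_from: "is_path A p u v \<Longrightarrow> z \<in> set p \<Longrightarrow> z \<noteq> u \<Longrightarrow> (u, z) \<in> A\<^sup>+"
  using is_path_set_rtrancl by (metis rtranclD)

lemma is_path_set_trancl_to: "is_path A p u v \<Longrightarrow> z \<in> set p \<Longrightarrow> z \<noteq> v \<Longrightarrow> (z, v) \<in> A\<^sup>+"
  using is_path_set_rtrancl by (metis rtranclD)

lemma is_path_set_comparable:
  assumes "is_path A p u v" "a \<in> set p" "b \<in> set p"
  shows "a = b \<or> (a, b) \<in> A\<^sup>+ \<or> (b, a) \<in> A\<^sup>+"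
  using assms(2,3) is_path_nth_trancl[OF assms(1)]
  by (auto simp: in_set_conv_nth) (metis linorder_neqE_nat)

lemma is_path_Cons:
  "acyclic A \<Longrightarrow> (u, u') \<in> A \<Longrightarrow> is_path A p u' v \<Longrightarrow> is_path A (u # p) u v"
  by (auto simp: is_path_iff_is_walk is_walk_iff_successively successively_Cons)

lemma is_path_first_step:
  assumes "is_path A p u v" "u \<noteq> v"
  obtains u' p' where "p = u # p'" "(u, u') \<in> A" "is_path A p' u' v"
proof -
  obtain u' p' where p: "p = u # u' # p'"
    using assms by (cases p rule: remdups_adj.cases) (auto simp: is_path_def is_walk_def)
  then show ?thesis
    using assms(1) that by (auto simp: is_path_def is_walk_iff_successively)
qed

lemma is_path_append:
  "acyclic A \<Longrightarrow> is_path A p u m \<Longrightarrow> is_path A q m v \<Longrightarrow> is_path A (p @ tl q) u v"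
  by (simp add: is_path_iff_is_walk is_walk_append)

lemma is_path_suffix:
  assumes "is_path A p u v" "z \<in> set p"
  obtains q where "is_path A q z v" "set q \<subseteq> set p"
proof -
  obtain k where k: "k < length p" "p ! k = z"
    using assms(2) by (auto simp: in_set_conv_nth)
  have "is_path A (drop k p) (p ! k) v"
    using assms(1) k(1) is_walk_drop unfolding is_path_def by auto
  then show ?thesis using that set_drop_subset k(2) by metis
qed

lemma rtrancl_imp_is_path:
  assumes "acyclic A" "(u, v) \<in> A\<^sup>*"
  shows "\<exists>p. is_path A p u v"
  using assms(2)
proof (induction rule: converse_rtrancl_induct)
  case base
  have "is_path A [v] v v" by (simp add: is_path_def is_walk_def)
  then show ?case ..
next
  case (step u u')
  then show ?case using is_path_Cons[OF assms(1)] by blast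
qed

lemma is_path_converse: "is_path (A\<inverse>) p u v \<longleftrightarrow> is_path A (rev p) v u"
  by (auto simp: is_path_def is_walk_iff_successively hd_rev last_rev)

lemma acyclic_trancl_not_rtrancl: "acyclic A \<Longrightarrow> (u, v) \<in> A\<^sup>+ \<Longrightarrow> (v, u) \<notin> A\<^sup>*"
  unfolding acyclic_def by (meson rtrancl_trancl_trancl)

lemma finite_acyclic_ex_maximal:
  assumes "finite A" "acyclic A" "v \<in> S"
  obtains z where "z \<in> S" "\<And>y. y \<in> S \<Longrightarrow> (z, y) \<notin> A\<^sup>+"
proof -
  have "wf ((A\<^sup>+)\<inverse>)"
    using assms(1,2) by (intro finite_acyclic_wf_converse) (simp_all add: acyclic_def)
  then show ?thesis using wfE_min[OF _ assms(3)] that by (metis converseI)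
qed

definition on_every_path :: "('a \<times> 'a) set \<Rightarrow> 'a \<Rightarrow> 'a \<Rightarrow> 'a \<Rightarrow> bool" where
  "on_every_path A v u x \<longleftrightarrow> (\<forall>p. is_path A p u x \<longrightarrow> v \<in> set p)"

lemma on_every_path_converse: "on_every_path (A\<inverse>) v x u \<longleftrightarrow> on_every_path A v u x"
  unfolding on_every_path_def is_path_converse by (metis rev_rev_ident set_rev)

lemma on_every_path_source: "on_every_path A u u x"
  by (simp add: on_every_path_def is_path_source_in_set)

lemma on_every_path_rtrancl:
  assumes "acyclic A" "(u, x) \<in> A\<^sup>*" "on_every_path A v u x"
  shows "(u, v) \<in> A\<^sup>* \<and> (v, x) \<in> A\<^sup>*"
proof -
  obtain p where p: "is_path A p u x" using rtrancl_imp_is_path[OF assms(1,2)] ..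
  then have "v \<in> set p" using assms(3) by (simp add: on_every_path_def)
  with p show ?thesis by (rule is_path_set_rtrancl)
qed

lemma on_every_path_after:
  assumes "acyclic A" "is_path A r q u" "v \<notin> set r" "on_every_path A v q x"
  shows "on_every_path A v u x"
  unfolding on_every_path_def
proof (intro allI impI)
  fix p assume "is_path A p u x"
  then have "v \<in> set (r @ tl p)"
    using assms(4) is_path_append[OF assms(1,2)] unfolding on_every_path_def by blast
  then show "v \<in> set p" using assms(3) by (cases p) auto
qed

lemma on_every_path_before:
  assumes "acyclic A" "is_path A p v x" "u \<notin> set p" "on_every_path A u r x"
  shows "on_every_path A u r v"
  unfolding on_every_path_def
proof (intro allI impI)
  fix q assume "is_path A q r v"
  then have "u \<in> set (q @ tl p)"
    using assms(4) is_path_append[OF assms(1) _ assms(2)] unfolding on_every_path_def by blast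
  then show "u \<in> set q" using assms(3) by (cases p) auto
qed

definition dominator :: "('a \<times> 'a) set \<Rightarrow> 'a \<Rightarrow> 'a \<Rightarrow> 'a \<Rightarrow> bool" where
  "dominator A r v x \<longleftrightarrow> v \<noteq> x \<and> on_every_path A v r x"

definition immediate_dominator :: "('a \<times> 'a) set \<Rightarrow> 'a \<Rightarrow> 'a \<Rightarrow> 'a \<Rightarrow> bool" where
  "immediate_dominator A r v x \<longleftrightarrow>
     dominator A r v x \<and> (\<forall>u. dominator A r u x \<and> u \<noteq> v \<longrightarrow> dominator A r u v)"

lemma dominator_of_dominator_trancl:
  assumes "acyclic A" "(r, x) \<in> A\<^sup>*" "dominator A r v x" "dominator A r u v"
  shows "(u, v) \<in> A\<^sup>+"
proof -
  have "(r, v) \<in> A\<^sup>*"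
    using on_every_path_rtrancl[OF assms(1,2)] assms(3) by (simp add: dominator_def)
  then obtain p where "is_path A p r v" using rtrancl_imp_is_path[OF assms(1)] by blast
  then show ?thesis
    using assms(4) is_path_set_trancl_to by (fastforce simp: dominator_def on_every_path_def)
qed

lemma ex1_immediate_dominator:
  assumes "finite A" "acyclic A" "r \<noteq> x" "(r, x) \<in> A\<^sup>*"
  shows "\<exists>!v. immediate_dominator A r v x"
proof (rule ex_ex1I)
  have "dominator A r r x" using assms(3) by (simp add: dominator_def on_every_path_source)
  then obtain v where v: "dominator A r v x" "\<And>y. dominator A r y x \<Longrightarrow> (v, y) \<notin> A\<^sup>+"
    using finite_acyclic_ex_maximal[OF assms(1,2), of r "Collect (\<lambda>v. dominator A r v x)"] by auto
  have "(v, x) \<in> A\<^sup>*"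
    using on_every_path_rtrancl[OF assms(2,4)] v(1) by (simp add: dominator_def)
  then obtain p where p: "is_path A p v x" using rtrancl_imp_is_path[OF assms(2)] by blast
  have "dominator A r u v" if "dominator A r u x" "u \<noteq> v" for u
  proof -
    have "u \<notin> set p" using is_path_set_trancl_from[OF p] v(2) that by blast
    then show ?thesis
      using on_every_path_before[OF assms(2) p] that by (simp add: dominator_def)
  qed
  then show "\<exists>v. immediate_dominator A r v x"
    using v(1) by (auto simp: immediate_dominator_def)
next
  fix v v' assume "immediate_dominator A r v x" "immediate_dominator A r v' x"
  then have "v \<noteq> v' \<Longrightarrow> (v, v') \<in> A\<^sup>+ \<and> (v', v) \<in> A\<^sup>+"
    using dominator_of_dominator_trancl[OF assms(2,4)] unfolding immediate_dominator_def by blast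
  then show "v = v'" using acyclic_trancl_not_rtrancl[OF assms(2)] by (blast dest: trancl_into_rtrancl)
qed

definition common_separator :: "('a \<times> 'a) set \<Rightarrow> 'a \<Rightarrow> 'a \<Rightarrow> 'a \<Rightarrow> bool" where
  "common_separator A p q x \<longleftrightarrow> (\<exists>v. v \<noteq> x \<and> on_every_path A v p x \<and> on_every_path A v q x)"

lemma common_separator_commute: "common_separator A p q x \<longleftrightarrow> common_separator A q p x"
  unfolding common_separator_def by blast

lemma on_every_path_if_not_before:
  assumes acyc: "acyclic A" and "(q, x) \<in> A\<^sup>*"
    and "on_every_path A u q x" "on_every_path A v q x" "on_every_path A u p x" "(v, u) \<notin> A\<^sup>+"
  shows "on_every_path A v p x"
proof -
  obtain Q where Q: "is_path A Q q x" using rtrancl_imp_is_path[OF acyc assms(2)] ..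
  then have "u \<in> set Q" "v \<in> set Q" using assms(3,4) by (auto simp: on_every_path_def)
  then consider "u = v" | "(u, v) \<in> A\<^sup>+"
    using is_path_set_comparable[OF Q] assms(6) by blast
  then show ?thesis
  proof cases
    case 2
    obtain R where R: "is_path A R q u"
      using rtrancl_imp_is_path[OF acyc] is_path_set_rtrancl[OF Q \<open>u \<in> set Q\<close>] by blast
    have "v \<notin> set R"
      using is_path_set_rtrancl[OF R] acyclic_trancl_not_rtrancl[OF acyc 2] by blast
    then have "on_every_path A v u x" using on_every_path_after[OF acyc R] assms(4) by blast
    then show ?thesis
      using assms(5) is_path_suffix unfolding on_every_path_def by (metis subsetD)
  qed (use assms(5) in simp)
qed

text \<open>The maximal one among the separators shared by \<open>q\<close> and a successor of \<open>p\<close> separates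
  \<open>p\<close> itself.\<close>

lemma common_separator_if_successors:
  assumes fin: "finite A" and acyc: "acyclic A"
    and "(p, x) \<in> A\<^sup>*" "(q, x) \<in> A\<^sup>*" "p \<noteq> x" "q \<noteq> x"
    and succ: "\<And>p'. (p, p') \<in> A \<Longrightarrow> (p', x) \<in> A\<^sup>* \<Longrightarrow> p' \<noteq> q \<Longrightarrow> common_separator A p' q x"
  shows "common_separator A p q x"
proof -
  define U where "U = {v. v \<noteq> x \<and> on_every_path A v q x \<and>
    (\<exists>p'. (p, p') \<in> A \<and> (p', x) \<in> A\<^sup>* \<and> on_every_path A v p' x)}"
  have hit: "\<exists>u\<in>U. on_every_path A u p' x" if "(p, p') \<in> A" "(p', x) \<in> A\<^sup>*" for p'
  proof (cases "p' = q")
    case True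
    then have "q \<in> U" using that \<open>q \<noteq> x\<close> by (auto simp: U_def on_every_path_source)
    then show ?thesis using True on_every_path_source[of A q x] by blast
  next
    case False
    then show ?thesis using succ[OF that False] that by (auto simp: common_separator_def U_def)
  qed
  have first_step: "\<exists>p' P'. P = p # P' \<and> (p, p') \<in> A \<and> (p', x) \<in> A\<^sup>* \<and> is_path A P' p' x"
    if "is_path A P p x" for P
    using is_path_first_step[OF that \<open>p \<noteq> x\<close>] is_path_set_rtrancl is_path_source_in_set by metis
  obtain P0 where "is_path A P0 p x" using rtrancl_imp_is_path[OF acyc \<open>(p, x) \<in> A\<^sup>*\<close>] ..
  then obtain u0 where "u0 \<in> U" using first_step hit by blast
  then obtain v where v: "v \<in> U" "\<And>y. y \<in> U \<Longrightarrow> (v, y) \<notin> A\<^sup>+"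
    using finite_acyclic_ex_maximal[OF fin acyc] by blast
  have "on_every_path A v p x" unfolding on_every_path_def
  proof (intro allI impI)
    fix P assume "is_path A P p x"
    then obtain p' P' where P': "P = p # P'" "(p, p') \<in> A" "(p', x) \<in> A\<^sup>*" "is_path A P' p' x"
      using first_step by blast
    then obtain u where u: "u \<in> U" "on_every_path A u p' x" using hit by blast
    have "on_every_path A u q x" "on_every_path A v q x" "(v, u) \<notin> A\<^sup>+"
      using u(1) v by (auto simp: U_def)
    then have "on_every_path A v p' x"
      using on_every_path_if_not_before[OF acyc \<open>(q, x) \<in> A\<^sup>*\<close>] u(2) by blast
    then show "v \<in> set P" using P'(1,4) by (simp add: on_every_path_def)
  qed
  then show ?thesis using v(1) by (auto simp: common_separator_def U_def)
qed

lemma card_rtrancl_Image_less: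
  assumes "finite A" "acyclic A" "(u, v) \<in> A"
  shows "card (A\<^sup>* `` {v}) < card (A\<^sup>* `` {u})"
proof -
  have "u \<notin> A\<^sup>* `` {v}" using acyclic_trancl_not_rtrancl[OF assms(2)] assms(3) by blast
  then have "A\<^sup>* `` {v} \<subset> A\<^sup>* `` {u}" using assms(3) by (auto intro: converse_rtrancl_into_rtrancl)
  then show ?thesis using assms(1) by (intro psubset_card_mono) auto
qed

lemma disjoint_paths_Cons:
  assumes "acyclic A" "(p, p') \<in> A" "(q, p) \<notin> A\<^sup>*"
    and "is_path A P p' x" "is_path A Q q x" "set P \<inter> set Q = {x}"
  shows "is_path A (p # P) p x \<and> set (p # P) \<inter> set Q = {x}"
proof -
  have "p \<notin> set Q" using is_path_set_rtrancl[OF assms(5)] assms(3) by blast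
  then show ?thesis using is_path_Cons[OF assms(1,2,4)] assms(6) by auto
qed

text \<open>The two-path case of Menger's theorem for vertex-disjoint paths into a common target.\<close>

lemma disjoint_paths_to_common_target:
  assumes fin: "finite A" and acyc: "acyclic A"
  shows "p \<noteq> q \<Longrightarrow> (p, x) \<in> A\<^sup>* \<Longrightarrow> (q, x) \<in> A\<^sup>* \<Longrightarrow> \<not> common_separator A p q x \<Longrightarrow>
    \<exists>P Q. is_path A P p x \<and> is_path A Q q x \<and> set P \<inter> set Q = {x}"
proof (induction "card (A\<^sup>* `` {p}) + card (A\<^sup>* `` {q})" arbitrary: p q rule: less_induct)
  case less
  have step: "\<exists>P Q. is_path A P p' x \<and> is_path A Q q' x \<and> set P \<inter> set Q = {x}"
    if swap: "(p' = p \<and> q' = q) \<or> (p' = q \<and> q' = p)" and qp: "(q', p') \<notin> A\<^sup>*" for p' q'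
  proof -
    have "p' \<noteq> q'" "(p', x) \<in> A\<^sup>*" "(q', x) \<in> A\<^sup>*" and nsep: "\<not> common_separator A p' q' x"
      using swap less.prems common_separator_commute[of A p q x] by auto
    obtain P where P: "is_path A P p' x" using rtrancl_imp_is_path[OF acyc \<open>(p', x) \<in> A\<^sup>*\<close>] ..
    show ?thesis
    proof (cases "q' = x")
      case True
      have "is_path A [x] q' x" using True by (simp add: is_path_def is_walk_def)
      with P show ?thesis using is_path_target_in_set by fastforce
    next
      case False
      have "p' \<noteq> x" using qp \<open>(q', x) \<in> A\<^sup>*\<close> by blast
      then obtain p'' where p'': "(p', p'') \<in> A" "(p'', x) \<in> A\<^sup>*" "p'' \<noteq> q'"
          "\<not> common_separator A p'' q' x"
        using common_separator_if_successors[OF fin acyc \<open>(p', x) \<in> A\<^sup>*\<close> \<open>(q', x) \<in> A\<^sup>*\<close>] nsep False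
        by blast
      obtain P' Q where "is_path A P' p'' x" "is_path A Q q' x" "set P' \<inter> set Q = {x}"
        using less.hyps[of p'' q'] card_rtrancl_Image_less[OF fin acyc p''(1)] swap p''
          \<open>(q', x) \<in> A\<^sup>*\<close> by auto
      then show ?thesis using disjoint_paths_Cons[OF acyc p''(1) qp] by blast
    qed
  qed
  show ?case
  proof (cases "(q, p) \<in> A\<^sup>*")
    case False
    then show ?thesis using step by blast
  next
    case True
    then have "(p, q) \<notin> A\<^sup>*"
      using less.prems(1) acyclic_trancl_not_rtrancl[OF acyc] by (meson rtranclD)
    then show ?thesis using step[of q p] by blast
  qed
qed

lemma walk_len_singleton [simp]: "walk_len w [a] = 0"
  by (simp add: walk_len_def)

lemma walk_len_Cons_Cons [simp]: "walk_len w (a # b # p) = w a b + walk_len w (b # p)"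
  unfolding walk_len_def by (simp add: sum.lessThan_Suc_shift del: sum.lessThan_Suc)

lemma walk_len_append: "walk_len w (p @ y # q) = walk_len w (p @ [y]) + walk_len w (y # q)"
  by (induction p rule: induct_list012) auto

lemma walk_len_concat:
  assumes "p \<noteq> []" "q \<noteq> []" "last p = hd q"
  shows "walk_len w (p @ tl q) = walk_len w p + walk_len w q"
proof -
  obtain q' where q: "q = last p # q'" using assms(2,3) by (cases q) auto
  have "walk_len w (p @ tl q) = walk_len w (butlast p @ last p # q')"
    using assms(1) q by (metis append_butlast_last_id append_Cons append_Nil append_assoc list.sel(3))
  also have "\<dots> = walk_len w (butlast p @ [last p]) + walk_len w (last p # q')"
    by (rule walk_len_append)
  finally show ?thesis using assms(1) q by simp
qed

lemma walk_len_take_drop: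
  assumes "j < length p"
  shows "walk_len w p = walk_len w (take (Suc j) p) + walk_len w (drop j p)"
proof -
  have "p = take j p @ p ! j # drop (Suc j) p" using assms by (simp add: id_take_nth_drop)
  then show ?thesis
    using walk_len_append[of w "take j p" "p ! j" "drop (Suc j) p"] assms
    by (simp add: take_Suc_conv_app_nth Cons_nth_drop_Suc)
qed

lemma walk_len_take_Suc:
  assumes "Suc j < length p"
  shows "walk_len w (take (Suc (Suc j)) p) = walk_len w (take (Suc j) p) + w (p ! j) (p ! Suc j)"
  using walk_len_append[of w "take j p" "p ! j" "[p ! Suc j]"] assms
  by (simp add: take_Suc_conv_app_nth)

locale shortest_path_dag =
  fixes V :: "'a set" and E :: "('a \<times> 'a) set" and w :: "'a \<Rightarrow> 'a \<Rightarrow> real" and s t :: 'a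
  assumes graph: "simple_graph V E w" and s_in_V: "s \<in> V" and t_in_V: "t \<in> V"
begin

abbreviation "D \<equiv> DA E w s t"
abbreviation "d \<equiv> gdist E w"

lemma edge_in_V: "(a, b) \<in> E \<Longrightarrow> a \<in> V \<and> b \<in> V"
  using graph unfolding simple_graph_def by blast

lemma weight_pos: "(a, b) \<in> E \<Longrightarrow> w a b > 0"
  using graph unfolding simple_graph_def by blast

lemma walk_len_nonneg: "is_walk E p u v \<Longrightarrow> walk_len w p \<ge> 0"
  unfolding walk_len_def is_walk_def by (auto intro!: sum_nonneg less_imp_le[OF weight_pos])

lemma gdist_le_walk_len: "is_walk E p u v \<Longrightarrow> d u v \<le> walk_len w p"
  unfolding gdist_def by (rule cInf_lower) (auto intro!: bdd_belowI[of _ 0] walk_len_nonneg)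

lemma gdist_greatest:
  "is_walk E p0 u v \<Longrightarrow> (\<And>p. is_walk E p u v \<Longrightarrow> c \<le> walk_len w p) \<Longrightarrow> c \<le> d u v"
  unfolding gdist_def by (rule cInf_greatest) auto

lemma gdist_triangle_walks:
  assumes "is_walk E p0 u m" "is_walk E q0 m v"
  shows "d u v \<le> d u m + d m v"
proof -
  have "d u v \<le> walk_len w p + walk_len w q" if "is_walk E p u m" "is_walk E q m v" for p q
    using gdist_le_walk_len[OF is_walk_append[OF that]] walk_len_concat[of p q w] that
    by (simp add: is_walk_def)
  then have "d u v - walk_len w q \<le> d u m" if "is_walk E q m v" for q
    using that by (intro gdist_greatest[OF assms(1)]) force
  then have "d u v - d u m \<le> d m v"
    by (intro gdist_greatest[OF assms(2)]) force
  then show ?thesis by simp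
qed

lemma gdist_triangle: "u \<in> V \<Longrightarrow> m \<in> V \<Longrightarrow> v \<in> V \<Longrightarrow> d u v \<le> d u m + d m v"
  using graph gdist_triangle_walks unfolding simple_graph_def by metis

lemma gdist_le_weight: "(a, b) \<in> E \<Longrightarrow> d a b \<le> w a b"
  using gdist_le_walk_len[of "[a, b]" a b] by (simp add: is_walk_def)

lemma gdist_shortest_path_prefix:
  assumes sp: "shortest_path E w p s t" and j: "j < length p"
  shows "d s (p ! j) = walk_len w (take (Suc j) p)"
proof -
  have P: "is_path E p s t" using sp unfolding shortest_path_def by simp
  have pre: "is_walk E (take (Suc j) p) s (p ! j)"
    using P j is_walk_take by (auto simp: is_path_def)
  have suf: "is_walk E (drop j p) (p ! j) t"
    using P j is_walk_drop by (auto simp: is_path_def)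
  have "walk_len w (take (Suc j) p) + walk_len w (drop j p) = d s t"
    using sp walk_len_take_drop[OF j, of w] by (simp add: shortest_path_def)
  also have "\<dots> \<le> d s (p ! j) + walk_len w (drop j p)"
    using gdist_triangle_walks[OF pre suf] gdist_le_walk_len[OF suf] by simp
  finally show ?thesis using gdist_le_walk_len[OF pre] by simp
qed

lemma DA_arc:
  assumes "(u, v) \<in> D"
  shows "(u, v) \<in> E \<and> d s v = d s u + w u v"
proof -
  obtain p i where p: "shortest_path E w p s t" "i < length p - 1" "u = p ! i" "v = p ! Suc i"
    using assms unfolding DA_def by blast
  then have "Suc i < length p" by linarith
  have "(u, v) \<in> E" using p by (auto simp: shortest_path_def is_path_def is_walk_def)
  moreover have "d s v = d s u + w u v"
    using gdist_shortest_path_prefix[OF p(1)] walk_len_take_Suc \<open>Suc i < length p\<close> p(3,4)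
    by simp
  ultimately show ?thesis ..
qed

lemma finite_DA: "finite D"
proof -
  have "D \<subseteq> V \<times> V" using DA_arc edge_in_V by auto
  moreover have "finite V" using graph unfolding simple_graph_def by simp
  ultimately show ?thesis by (simp add: finite_subset)
qed

lemma DA_trancl_gdist:
  assumes "(u, v) \<in> D\<^sup>+"
  shows "d s u < d s v \<and> d u v = d s v - d s u"
proof -
  have "u \<in> V" using assms DA_arc edge_in_V by (metis converse_tranclE)
  have "d s u < d s v \<and> d u v \<le> d s v - d s u \<and> v \<in> V"
    using assms
  proof (induction rule: trancl_induct)
    case (base y)
    then show ?case using DA_arc weight_pos gdist_le_weight edge_in_V by fastforce
  next
    case (step y z)
    have "(y, z) \<in> E" "d s z = d s y + w y z" using DA_arc[OF step(2)] by auto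
    moreover have "d u z \<le> d u y + d y z" using \<open>u \<in> V\<close> step(3) edge_in_V[OF \<open>(y, z) \<in> E\<close>]
      by (intro gdist_triangle) auto
    ultimately show ?case using step(3) weight_pos gdist_le_weight edge_in_V by fastforce
  qed
  moreover have "v \<in> V \<Longrightarrow> d s v \<le> d s u + d u v" using s_in_V \<open>u \<in> V\<close> gdist_triangle by blast
  ultimately show ?thesis by simp
qed

lemma acyclic_DA: "acyclic D"
  unfolding acyclic_def using DA_trancl_gdist by blast

lemma DV_rtrancl:
  assumes "v \<in> DV E w s t"
  shows "(s, v) \<in> D\<^sup>* \<and> (v, t) \<in> D\<^sup>*"
proof -
  obtain p where p: "shortest_path E w p s t" "v \<in> set p" using assms unfolding DV_def by blast
  then have "is_path D p s t"
    unfolding shortest_path_def is_path_def is_walk_def DA_def by blast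
  then show ?thesis using p(2) by (rule is_path_set_rtrancl)
qed

lemma DA_trancl_DV:
  assumes "(u, v) \<in> D\<^sup>+"
  shows "u \<in> DV E w s t \<and> v \<in> DV E w s t"
proof -
  have "a \<in> DV E w s t \<and> b \<in> DV E w s t" if ab: "(a, b) \<in> D" for a b
  proof -
    obtain p i where "shortest_path E w p s t" "i < length p - 1" "a = p ! i" "b = p ! Suc i"
      using ab unfolding DA_def by blast
    then show ?thesis unfolding DV_def by auto
  qed
  then show ?thesis using assms by (metis converse_tranclE tranclE)
qed

lemma sdom_iff_dominator: "sdom E w s t v x \<longleftrightarrow> dominator D s v x"
  unfolding sdom_def dpath_def dominator_def on_every_path_def ..

lemma tdom_iff_dominator: "tdom E w s t v x \<longleftrightarrow> dominator (D\<inverse>) t v x"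
  unfolding dominator_def on_every_path_converse unfolding tdom_def dpath_def on_every_path_def ..

lemma Is_immediate_dominator:
  assumes "x \<in> DV E w s t" "x \<noteq> s"
  shows "immediate_dominator D s (Is E w s t x) x"
proof -
  have "\<exists>!v. immediate_dominator D s v x"
    using ex1_immediate_dominator[OF finite_DA acyclic_DA] assms DV_rtrancl by metis
  then show ?thesis
    unfolding Is_def sdom_iff_dominator immediate_dominator_def[symmetric] by (rule theI')
qed

lemma It_immediate_dominator:
  assumes "z \<in> DV E w s t" "z \<noteq> t"
  shows "immediate_dominator (D\<inverse>) t (It E w s t z) z"
proof -
  have "(t, z) \<in> (D\<inverse>)\<^sup>*" using DV_rtrancl[OF assms(1)] by (simp add: rtrancl_converse)
  then have "\<exists>!v. immediate_dominator (D\<inverse>) t v z"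
    using ex1_immediate_dominator[of "D\<inverse>"] finite_DA acyclic_DA assms(2) by simp
  then show ?thesis
    unfolding It_def tdom_iff_dominator immediate_dominator_def[symmetric] by (rule theI')
qed

text \<open>The immediate \<open>t\<close>-dominator of \<open>z\<close> cannot lie on the \<open>zx\<close>-path \<open>Q\<close>, so it lies on
  every \<open>xt\<close>-path.\<close>

lemma It_beyond_branch_point:
  assumes "(z, x) \<in> D\<^sup>+" "is_path D Q z x" "is_path D R z t" "set Q \<inter> set R = {z}"
  shows "(x, It E w s t z) \<in> D\<^sup>+"
proof -
  let ?b = "It E w s t z"
  have x_t: "(x, t) \<in> D\<^sup>*" using DV_rtrancl DA_trancl_DV assms(1) by blast
  then have "z \<noteq> t" using acyclic_trancl_not_rtrancl[OF acyclic_DA assms(1)] by blast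
  then have "immediate_dominator (D\<inverse>) t ?b z"
    using It_immediate_dominator DA_trancl_DV[OF assms(1)] by blast
  then have b: "?b \<noteq> z" "on_every_path D ?b z t"
    by (simp_all add: immediate_dominator_def dominator_def on_every_path_converse)
  obtain Rx where Rx: "is_path D Rx x t" using rtrancl_imp_is_path[OF acyclic_DA x_t] ..
  have "?b \<in> set (Q @ tl Rx)" "?b \<in> set R"
    using b(2) is_path_append[OF acyclic_DA assms(2) Rx] assms(3) by (auto simp: on_every_path_def)
  then have "?b \<in> set Rx" using assms(4) b(1) by (cases Rx) auto
  moreover have "x \<notin> set R"
    using assms(4) is_path_target_in_set[OF assms(2)] assms(1) acyclic_DA
    by (auto simp: acyclic_def)
  ultimately show ?thesis using is_path_set_trancl_from[OF Rx] \<open>?b \<in> set R\<close> by blast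
qed

end

locale gfun_minimizer = shortest_path_dag +
  fixes x y :: 'a
  assumes x_in_DV: "x \<in> DV E w s t" and x_ne_s: "x \<noteq> s"
    and gstar_finite: "gstar E w s t x \<noteq> \<infinity>"
    and minimizer: "gfun E w s t x y = gstar E w s t x"
begin

lemma Is_x_before_y: "(Is E w s t x, y) \<in> D\<^sup>+"
  and y_before_x: "(y, x) \<in> D\<^sup>+"
  and x_before_It_y: "(x, It E w s t y) \<in> D\<^sup>+"
  using gstar_finite minimizer unfolding gfun_def Cset_def anc_def by (auto split: if_splits)

lemma gfun_y: "gfun E w s t x y = ereal (d y x)"
  using Is_x_before_y y_before_x x_before_It_y by (simp add: gfun_def Cset_def anc_def)

lemma y_ne_s: "y \<noteq> s"
proof -
  have "(s, Is E w s t x) \<in> D\<^sup>*" using DA_trancl_DV DV_rtrancl Is_x_before_y by blast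
  then show ?thesis using acyclic_trancl_not_rtrancl[OF acyclic_DA Is_x_before_y] by blast
qed

text \<open>Such a \<open>z\<close> would lie in \<open>C(x)\<close> with \<open>g(x,z) = d(z,x) < d(y,x)\<close>.\<close>

lemma no_branch_point_after_y:
  assumes "(y, z) \<in> D\<^sup>+" "(z, x) \<in> D\<^sup>+" "is_path D Q z x" "is_path D R z t" "set Q \<inter> set R = {z}"
  shows False
proof -
  have "(Is E w s t x, z) \<in> D\<^sup>+" using Is_x_before_y assms(1) by simp
  then have "gfun E w s t x z = ereal (d z x)"
    using It_beyond_branch_point[OF assms(2-5)] assms(2) by (simp add: gfun_def Cset_def anc_def)
  moreover have "gstar E w s t x \<le> gfun E w s t x z"
    unfolding gstar_def using DA_trancl_DV[OF assms(2)] by (blast intro: INF_lower)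
  ultimately have "ereal (d y x) \<le> ereal (d z x)" using minimizer gfun_y by metis
  then have "d y x \<le> d z x" by simp
  then show False using DA_trancl_gdist assms(1,2) y_before_x by fastforce
qed

lemma path_y_t_avoiding_x: "\<exists>P. is_path D P y t \<and> x \<notin> set P"
proof (rule ccontr)
  let ?b = "It E w s t y"
  assume "\<nexists>P. is_path D P y t \<and> x \<notin> set P"
  then have "on_every_path D x y t" by (auto simp: on_every_path_def)
  moreover have "x \<noteq> y" "x \<noteq> ?b"
    using y_before_x x_before_It_y acyclic_DA by (auto simp: acyclic_def)
  moreover have "y \<in> DV E w s t" "y \<noteq> t"
    using DA_trancl_DV DV_rtrancl x_in_DV y_before_x acyclic_trancl_not_rtrancl[OF acyclic_DA]
    by blast+
  ultimately have "dominator (D\<inverse>) t x y" "immediate_dominator (D\<inverse>) t ?b y"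
    using It_immediate_dominator by (simp_all add: dominator_def on_every_path_converse)
  then have "on_every_path D x ?b t"
    using \<open>x \<noteq> ?b\<close> by (simp add: immediate_dominator_def dominator_def on_every_path_converse)
  moreover obtain P where "is_path D P ?b t"
    using rtrancl_imp_is_path[OF acyclic_DA] DV_rtrancl DA_trancl_DV[OF x_before_It_y] by blast
  ultimately have "(?b, x) \<in> D\<^sup>*" using is_path_set_rtrancl by (fastforce simp: on_every_path_def)
  then show False using acyclic_trancl_not_rtrancl[OF acyclic_DA x_before_It_y] by blast
qed

lemma no_common_separator: "\<not> common_separator D s y x"
proof
  let ?a = "Is E w s t x"
  assume "common_separator D s y x"
  then obtain v where v: "v \<noteq> x" "on_every_path D v s x" "on_every_path D v y x"
    unfolding common_separator_def by blast
  have "(y, v) \<in> D\<^sup>*"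
    using on_every_path_rtrancl[OF acyclic_DA trancl_into_rtrancl[OF y_before_x] v(3)] by simp
  moreover have "(v, ?a) \<in> D\<^sup>*"
  proof (cases "v = ?a")
    case False
    then have "on_every_path D v s ?a"
      using Is_immediate_dominator[OF x_in_DV x_ne_s] v(1,2)
      by (auto simp: immediate_dominator_def dominator_def)
    moreover have "(s, ?a) \<in> D\<^sup>*" using DV_rtrancl DA_trancl_DV Is_x_before_y by blast
    ultimately show ?thesis using on_every_path_rtrancl[OF acyclic_DA] by blast
  qed simp
  ultimately show False
    using acyclic_trancl_not_rtrancl[OF acyclic_DA Is_x_before_y] by (meson rtrancl_trans)
qed

text \<open>A maximal common vertex other than \<open>y\<close> would be a forbidden branch point.\<close>

lemma meets_path_avoiding_x:
  assumes P: "is_path D P u x" and R: "is_path D R y t" and "x \<notin> set R"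
  shows "set P \<inter> set R \<subseteq> {y}"
proof
  fix c assume c: "c \<in> set P \<inter> set R"
  obtain m where m: "m \<in> set P \<inter> set R" "\<And>c. c \<in> set P \<inter> set R \<Longrightarrow> (m, c) \<notin> D\<^sup>+"
    using finite_acyclic_ex_maximal[OF finite_DA acyclic_DA c] by blast
  show "c \<in> {y}"
  proof (rule ccontr)
    assume "c \<notin> {y}"
    then have "m \<noteq> y" using m c is_path_set_trancl_from[OF R] by blast
    then have y_m: "(y, m) \<in> D\<^sup>+" and m_x: "(m, x) \<in> D\<^sup>+"
      using m(1) is_path_set_trancl_from[OF R] is_path_set_trancl_to[OF P] \<open>x \<notin> set R\<close> by auto
    obtain Q where Q: "is_path D Q m x" "set Q \<subseteq> set P"
      using is_path_suffix[OF P] m(1) by blast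
    obtain R' where R': "is_path D R' m t" "set R' \<subseteq> set R"
      using is_path_suffix[OF R] m(1) by blast
    have "set Q \<inter> set R' \<subseteq> {m}"
      using Q R' m(2) is_path_set_trancl_from[OF Q(1)] by blast
    then have "set Q \<inter> set R' = {m}"
      using is_path_source_in_set[OF Q(1)] is_path_source_in_set[OF R'(1)] by blast
    then show False by (rule no_branch_point_after_y[OF y_m m_x Q(1) R'(1)])
  qed
qed

end

theorem lemma6:
  fixes V :: "'a set" and E :: "('a \<times> 'a) set" and w :: "'a \<Rightarrow> 'a \<Rightarrow> real"
    and s t x ystar :: 'a
  assumes "simple_graph V E w"
    and "s \<in> V" and "t \<in> V"
    and "x \<in> DV E w s t" and "x \<noteq> s"
    and "gstar E w s t x \<noteq> \<infinity>"
    and "ystar \<in> DV E w s t"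
    and "gfun E w s t x ystar = gstar E w s t x"
  shows "\<exists>P1 P2 P3. dpath E w s t P1 s x \<and> dpath E w s t P2 ystar x \<and> dpath E w s t P3 ystar t
           \<and> int_disjoint P1 P2 \<and> int_disjoint P1 P3 \<and> int_disjoint P2 P3"
proof -
  interpret gfun_minimizer V E w s t x ystar
    using assms by unfold_locales
  obtain P3 where P3: "is_path D P3 ystar t" "x \<notin> set P3"
    using path_y_t_avoiding_x by blast
  obtain P1 P2 where P12: "is_path D P1 s x" "is_path D P2 ystar x" "set P1 \<inter> set P2 = {x}"
    using disjoint_paths_to_common_target[OF finite_DA acyclic_DA] y_ne_s no_common_separator
      DV_rtrancl[OF x_in_DV] y_before_x by (metis trancl_into_rtrancl)
  have "set P2 \<inter> set P3 = {ystar}"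
    using meets_path_avoiding_x[OF P12(2) P3] is_path_source_in_set[OF P12(2)]
      is_path_source_in_set[OF P3(1)] by blast
  moreover have "set P1 \<inter> set P3 = {}"
    using meets_path_avoiding_x[OF P12(1) P3] P12(3) is_path_source_in_set[OF P12(2)] P3(2) by blast
  moreover have "hd P1 = s" "last P1 = x" "hd P2 = ystar" "last P2 = x" "hd P3 = ystar" "last P3 = t"
    using P12 P3 by (auto simp: is_path_def is_walk_def)
  ultimately have "int_disjoint P1 P2" "int_disjoint P1 P3" "int_disjoint P2 P3"
    using P12(3) unfolding int_disjoint_def by auto
  with P12 P3(1) show ?thesis unfolding dpath_def by blast
qed

end
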